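(* Let $(A,\circ,[\cdot,\cdot])$ be a dual pre-Poisson algebra and $(V;l_\circ,r_\circ,l_{[\cdot,\cdot]},r_{[\cdot,\cdot]})$ a finite-dimensional representation of it. Then $(V^*;-l_\circ^*,-l_\circ^*+r_\circ^*,l_{[\cdot,\cdot]}^*,-l_{[\cdot,\cdot]}^*-r_{[\cdot,\cdot]}^* )$ is a representation of $(A,\circ,[\cdot,\cdot])$. Consequently, $A\oplus V^*$ with $$(x+u^* )\circ(y+v^* )=x\circ y-l_\circ^*(x)v^*+(-l_\circ^*+r_\circ^* )(y)u^*,$$ $$[x+u^*,y+v^*]=[x,y]+l_{[\cdot,\cdot]}^*(x)v^*-(l_{[\cdot,\cdot]}^*+r_{[\cdot,\cdot]}^* )(y)u^*$$ is a dual pre-Poisson algebra.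
   Context: Field $\mathbb{F}$ of characteristic $0$. For $f:A\to\mathrm{End}(V)$, $f^*:A\to\mathrm{End}(V^* )$ is given by $\langle f^*(x)v^*,u\rangle=-\langle v^*,f(x)u\rangle$. A dual pre-Poisson algebra $(A,\circ,[\cdot,\cdot])$: $x\circ(y\circ z)=(x\circ y)\circ z=(y\circ x)\circ z$; $[x,[y,z]]=[[x,y],z]+[y,[x,z]]$; $[x,y\circ z]=[x,y]\circ z+y\circ[x,z]$; $[x\circ y,z]=x\circ[y,z]+y\circ[x,z]$; $[x,y]\circ z=-[y,x]\circ z$. A representation $(V;l_\circ,r_\circ,l_{[\cdot,\cdot]},r_{[\cdot,\cdot]})$ is a vector space $V$ with linear maps $A\to\mathrm{End}(V)$ satisfying, for all $x,y\in A$: $r_\circ(x)r_\circ(y)=r_\circ(y\circ x)=l_\circ(y)r_\circ(x)=r_\circ(x)l_\circ(y)$; $l_\circ(x\circ y)=l_\circ(x)l_\circ(y)=l_\circ(y)l_\circ(x)$; $l_{[\cdot,\cdot]}([x,y])=l_{[\cdot,\cdot]}(x)l_{[\cdot,\cdot]}(y)-l_{[\cdot,\cdot]}(y)l_{[\cdot,\cdot]}(x)$; $r_{[\cdot,\cdot]}([x,y])=r_{[\cdot,\cdot]}(y)r_{[\cdot,\cdot]}(x)+l_{[\cdot,\cdot]}(x)r_{[\cdot,\cdot]}(y)$; $r_{[\cdot,\cdot]}(x)r_{[\cdot,\cdot]}(y)=-r_{[\cdot,\cdot]}(x)l_{[\cdot,\cdot]}(y)$; $r_{[\cdot,\cdot]}(x\circ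 y)=r_\circ(y)r_{[\cdot,\cdot]}(x)+l_\circ(x)r_{[\cdot,\cdot]}(y)$; $l_{[\cdot,\cdot]}(x)r_\circ(y)=r_\circ(y)l_{[\cdot,\cdot]}(x)+r_\circ([x,y])$; $l_{[\cdot,\cdot]}(x)l_\circ(y)=l_\circ([x,y])+l_\circ(y)l_{[\cdot,\cdot]}(x)$; $r_{[\cdot,\cdot]}(x)r_\circ(y)=r_\circ([y,x])+l_\circ(y)r_{[\cdot,\cdot]}(x)$; $l_{[\cdot,\cdot]}(x\circ y)=l_\circ(x)l_{[\cdot,\cdot]}(y)+l_\circ(y)l_{[\cdot,\cdot]}(x)$; $r_{[\cdot,\cdot]}(x)(l_\circ-r_\circ)(y)=0$; $r_\circ(x)(l_{[\cdot,\cdot]}+r_{[\cdot,\cdot]})(y)=0$; $l_\circ([x,y]+[y,x])=0$. *)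

theory Defs
  imports Main "HOL.Vector_Spaces" "HOL-Library.Function_Algebras" "HOL-Library.Product_Plus"
begin

text \<open>Substructures (like the dual space, which is the set of
  linear functionals inside the type of all functions) are given by a carrier set.\<close>

definition bilinear_on ::
  "('f::field \<Rightarrow> 'b::ab_group_add \<Rightarrow> 'b) \<Rightarrow> 'b set \<Rightarrow> ('b \<Rightarrow> 'b \<Rightarrow> 'b) \<Rightarrow> bool" where
  "bilinear_on s S m \<longleftrightarrow>
     (\<forall>x\<in>S. \<forall>y\<in>S. m x y \<in> S) \<and>
     (\<forall>x\<in>S. \<forall>y\<in>S. \<forall>z\<in>S. m (x + y) z = m x z + m y z \<and> m x (y + z) = m x y + m x z) \<and>
     (\<forall>c. \<forall>x\<in>S. \<forall>y\<in>S. m (s c x) y = s c (m x y) \<and> m x (s c y) = s c (m x y))"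

definition dual_pre_poisson_on ::
  "('f::field \<Rightarrow> 'b::ab_group_add \<Rightarrow> 'b) \<Rightarrow> 'b set \<Rightarrow> ('b \<Rightarrow> 'b \<Rightarrow> 'b) \<Rightarrow> ('b \<Rightarrow> 'b \<Rightarrow> 'b) \<Rightarrow> bool" where
  "dual_pre_poisson_on s S circ br \<longleftrightarrow>
     vector_space s \<and> module.subspace s S \<and> bilinear_on s S circ \<and> bilinear_on s S br \<and>
     (\<forall>x\<in>S. \<forall>y\<in>S. \<forall>z\<in>S.
        circ x (circ y z) = circ (circ x y) z \<and>
        circ (circ x y) z = circ (circ y x) z \<and>
        br x (br y z) = br (br x y) z + br y (br x z) \<and>
        br x (circ y z) = circ (br x y) z + circ y (br x z) \<and>
        br (circ x y) z = circ x (br y z) + circ y (br x z) \<and>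
        circ (br x y) z = - circ (br y x) z)"

definition lin_action_on ::
  "('f::field \<Rightarrow> 'a::ab_group_add \<Rightarrow> 'a) \<Rightarrow> 'a set \<Rightarrow> ('f \<Rightarrow> 'w::ab_group_add \<Rightarrow> 'w) \<Rightarrow> 'w set
     \<Rightarrow> ('a \<Rightarrow> 'w \<Rightarrow> 'w) \<Rightarrow> bool" where
  "lin_action_on sA A sW W \<rho> \<longleftrightarrow>
     (\<forall>x\<in>A. \<forall>w\<in>W. \<rho> x w \<in> W) \<and>
     (\<forall>x\<in>A. \<forall>w1\<in>W. \<forall>w2\<in>W. \<rho> x (w1 + w2) = \<rho> x w1 + \<rho> x w2) \<and>
     (\<forall>c. \<forall>x\<in>A. \<forall>w\<in>W. \<rho> x (sW c w) = sW c (\<rho> x w)) \<and>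
     (\<forall>x\<in>A. \<forall>y\<in>A. \<forall>w\<in>W. \<rho> (x + y) w = \<rho> x w + \<rho> y w) \<and>
     (\<forall>c. \<forall>x\<in>A. \<forall>w\<in>W. \<rho> (sA c x) w = sW c (\<rho> x w))"

definition dpp_rep_on ::
  "('f::field \<Rightarrow> 'a::ab_group_add \<Rightarrow> 'a) \<Rightarrow> 'a set \<Rightarrow> ('a \<Rightarrow> 'a \<Rightarrow> 'a) \<Rightarrow> ('a \<Rightarrow> 'a \<Rightarrow> 'a)
     \<Rightarrow> ('f \<Rightarrow> 'w::ab_group_add \<Rightarrow> 'w) \<Rightarrow> 'w set
     \<Rightarrow> ('a \<Rightarrow> 'w \<Rightarrow> 'w) \<Rightarrow> ('a \<Rightarrow> 'w \<Rightarrow> 'w) \<Rightarrow> ('a \<Rightarrow> 'w \<Rightarrow> 'w) \<Rightarrow> ('a \<Rightarrow> 'w \<Rightarrow> 'w) \<Rightarrow> bool" where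
  "dpp_rep_on sA A circ br sW W lc rc lb rb \<longleftrightarrow>
     vector_space sW \<and> module.subspace sW W \<and>
     lin_action_on sA A sW W lc \<and> lin_action_on sA A sW W rc \<and>
     lin_action_on sA A sW W lb \<and> lin_action_on sA A sW W rb \<and>
     (\<forall>x\<in>A. \<forall>y\<in>A. \<forall>w\<in>W.
        rc x (rc y w) = rc (circ y x) w \<and>
        rc (circ y x) w = lc y (rc x w) \<and>
        lc y (rc x w) = rc x (lc y w) \<and>
        lc (circ x y) w = lc x (lc y w) \<and>
        lc x (lc y w) = lc y (lc x w) \<and>
        lb (br x y) w = lb x (lb y w) - lb y (lb x w) \<and>
        rb (br x y) w = rb y (rb x w) + lb x (rb y w) \<and>
        rb x (rb y w) = - rb x (lb y w) \<and>
        rb (circ x y) w = rc y (rb x w) + lc x (rb y w) \<and>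
        lb x (rc y w) = rc y (lb x w) + rc (br x y) w \<and>
        lb x (lc y w) = lc (br x y) w + lc y (lb x w) \<and>
        rb x (rc y w) = rc (br y x) w + lc y (rb x w) \<and>
        lb (circ x y) w = lc x (lb y w) + lc y (lb x w) \<and>
        rb x (lc y w - rc y w) = 0 \<and>
        rc x (lb y w + rb y w) = 0 \<and>
        lc (br x y + br y x) w = 0)"

definition dual_space :: "('f::field \<Rightarrow> 'v::ab_group_add \<Rightarrow> 'v) \<Rightarrow> ('v \<Rightarrow> 'f) set" where
  "dual_space sV = {\<phi>. Vector_Spaces.linear sV ((*) :: 'f \<Rightarrow> 'f \<Rightarrow> 'f) \<phi>}"

definition dual_scale :: "'f::field \<Rightarrow> ('v \<Rightarrow> 'f) \<Rightarrow> ('v \<Rightarrow> 'f)" where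
  "dual_scale c \<phi> = (\<lambda>u. c * \<phi> u)"

definition dual_op :: "('a \<Rightarrow> 'v \<Rightarrow> 'v) \<Rightarrow> 'a \<Rightarrow> ('v \<Rightarrow> 'f::field) \<Rightarrow> ('v \<Rightarrow> 'f)" where
  "dual_op f x \<phi> = (\<lambda>u. - \<phi> (f x u))"

definition sum_scale ::
  "('f::field \<Rightarrow> 'a \<Rightarrow> 'a) \<Rightarrow> 'f \<Rightarrow> 'a \<times> ('v \<Rightarrow> 'f) \<Rightarrow> 'a \<times> ('v \<Rightarrow> 'f)" where
  "sum_scale sA c p = (sA c (fst p), dual_scale c (snd p))"

end

(* The operators on V* are
   transposes of signed combinations of the operators on V, and transposition reverses composition,
   so each axiom of the dual representation is the transpose of a consequence of the axioms for V.
   The algebra on the direct sum of A and V* is the semidirect product of A with the representation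
   V*, and the semidirect product of a dual pre-Poisson algebra with any of its representations
   satisfies the axioms by a direct expansion. In both cases the axioms for V, read as rewrite rules
   towards a normal form, reduce every required identity to a triviality. *)

theory Submission
  imports Defs
begin

lemma vector_space_mult: "vector_space ((*) :: 'f::field \<Rightarrow> 'f \<Rightarrow> 'f)"
  by (simp add: vector_space_def algebra_simps)

lemma vector_space_dual_scale: "vector_space (dual_scale :: 'f::field \<Rightarrow> ('v \<Rightarrow> 'f) \<Rightarrow> 'v \<Rightarrow> 'f)"
  by (simp add: vector_space_def dual_scale_def fun_eq_iff algebra_simps)

lemma mem_dual_space_iff:
  assumes "vector_space sV"
  shows "\<phi> \<in> dual_space sV \<longleftrightarrow> (\<forall>u v. \<phi> (u + v) = \<phi> u + \<phi> v) \<and> (\<forall>c u. \<phi> (sV c u) = c * \<phi> u)"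
  using assms by (simp add: dual_space_def linear_iff vector_space_mult)

lemma dual_spaceD:
  assumes "\<phi> \<in> dual_space sV"
  shows "\<phi> (u + v) = \<phi> u + \<phi> v" "\<phi> (- u) = - \<phi> u" "\<phi> (u - v) = \<phi> u - \<phi> v" "\<phi> 0 = 0"
    "\<phi> (sV c u) = c * \<phi> u"
proof -
  interpret module_hom sV "(*)" \<phi>
    using assms unfolding dual_space_def module_hom_iff_linear mem_Collect_eq .
  show "\<phi> (u + v) = \<phi> u + \<phi> v" "\<phi> (- u) = - \<phi> u" "\<phi> (u - v) = \<phi> u - \<phi> v" "\<phi> 0 = 0"
    "\<phi> (sV c u) = c * \<phi> u"
    by (simp_all add: add neg diff scale)
qed

lemma subspace_dual_space:
  fixes sV :: "'f::field \<Rightarrow> 'v::ab_group_add \<Rightarrow> 'v"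
  assumes "vector_space sV"
  shows "module.subspace dual_scale (dual_space sV)"
proof -
  interpret vector_space "dual_scale :: 'f \<Rightarrow> ('v \<Rightarrow> 'f) \<Rightarrow> 'v \<Rightarrow> 'f"
    by (fact vector_space_dual_scale)
  show ?thesis
    by (rule subspaceI) (simp_all add: mem_dual_space_iff[OF assms] dual_scale_def algebra_simps)
qed

lemma lin_action_on_closed: "lin_action_on sA S sW W \<rho> \<Longrightarrow> x \<in> S \<Longrightarrow> w \<in> W \<Longrightarrow> \<rho> x w \<in> W"
  and lin_action_on_add_right:
    "lin_action_on sA S sW W \<rho> \<Longrightarrow> x \<in> S \<Longrightarrow> v \<in> W \<Longrightarrow> w \<in> W \<Longrightarrow> \<rho> x (v + w) = \<rho> x v + \<rho> x w"
  and lin_action_on_add_left: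
    "lin_action_on sA S sW W \<rho> \<Longrightarrow> x \<in> S \<Longrightarrow> y \<in> S \<Longrightarrow> w \<in> W \<Longrightarrow> \<rho> (x + y) w = \<rho> x w + \<rho> y w"
  unfolding lin_action_on_def by blast+

lemma lin_action_on_add:
  assumes "vector_space sW" "module.subspace sW W"
    and "lin_action_on sA S sW W f" "lin_action_on sA S sW W g"
  shows "lin_action_on sA S sW W (\<lambda>x. f x + g x)"
proof -
  interpret vector_space sW by (fact assms(1))
  show ?thesis
    using assms(3,4) subspace_add[OF assms(2)] unfolding lin_action_on_def
    by (simp add: scale_right_distrib add_ac)
qed

lemma lin_action_on_uminus:
  assumes "vector_space sW" "module.subspace sW W" "lin_action_on sA S sW W f"
  shows "lin_action_on sA S sW W (\<lambda>x. - f x)"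
proof -
  interpret vector_space sW by (fact assms(1))
  show ?thesis
    using assms(3) subspace_neg[OF assms(2)] unfolding lin_action_on_def
    by (simp add: scale_right_distrib add_ac)
qed

lemma lin_action_on_diff:
  assumes "vector_space sW" "module.subspace sW W"
    and "lin_action_on sA S sW W f" "lin_action_on sA S sW W g"
  shows "lin_action_on sA S sW W (\<lambda>x. f x - g x)"
  using lin_action_on_add[OF assms(1,2,3) lin_action_on_uminus[OF assms(1,2,4)]] by simp

lemma lin_action_on_dual_op:
  assumes "vector_space sV" "lin_action_on sA S sV UNIV f"
  shows "lin_action_on sA S dual_scale (dual_space sV) (dual_op f)"
  using assms(2)
  by (auto simp: lin_action_on_def mem_dual_space_iff[OF assms(1)] dual_op_def dual_scale_def
      dual_spaceD fun_eq_iff algebra_simps)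

definition prod_scale :: "('f \<Rightarrow> 'a \<Rightarrow> 'a) \<Rightarrow> ('f \<Rightarrow> 'w \<Rightarrow> 'w) \<Rightarrow> 'f \<Rightarrow> 'a \<times> 'w \<Rightarrow> 'a \<times> 'w" where
  "prod_scale sA sW c p = (sA c (fst p), sW c (snd p))"

definition semidirect_mult ::
  "('a \<Rightarrow> 'a \<Rightarrow> 'a) \<Rightarrow> ('a \<Rightarrow> 'w \<Rightarrow> 'w) \<Rightarrow> ('a \<Rightarrow> 'w \<Rightarrow> 'w) \<Rightarrow> 'a \<times> 'w \<Rightarrow> 'a \<times> 'w \<Rightarrow> 'a \<times> 'w::plus" where
  "semidirect_mult m l r = (\<lambda>(x, u) (y, v). (m x y, l x v + r y u))"

lemma vector_space_prod_scale:
  assumes "vector_space sA" "vector_space sW"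
  shows "vector_space (prod_scale sA sW)"
  using assms by (simp add: vector_space_def prod_scale_def)

lemma subspace_prod_scale_Times:
  assumes "vector_space sA" "vector_space sW" "module.subspace sA S" "module.subspace sW W"
  shows "module.subspace (prod_scale sA sW) (S \<times> W)"
proof -
  interpret A: vector_space sA by (fact assms(1))
  interpret W: vector_space sW by (fact assms(2))
  interpret vector_space "prod_scale sA sW" using assms(1,2) by (rule vector_space_prod_scale)
  show ?thesis
    using assms(3,4)
    by (intro subspaceI) (auto simp: prod_scale_def zero_prod_def A.subspace_def W.subspace_def)
qed

lemma bilinear_on_semidirect_mult:
  assumes "vector_space sW" "module.subspace sW W" "bilinear_on sA UNIV m"
    and "lin_action_on sA UNIV sW W l" "lin_action_on sA UNIV sW W r"
  shows "bilinear_on (prod_scale sA sW) (UNIV \<times> W) (semidirect_mult m l r)"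
proof -
  interpret vector_space sW by (fact assms(1))
  show ?thesis
    using assms(3-5) subspace_add[OF assms(2)]
    unfolding bilinear_on_def lin_action_on_def semidirect_mult_def prod_scale_def
    by (auto simp: scale_right_distrib add_ac)
qed

lemma dual_pre_poisson_onI:
  assumes "vector_space s" "module.subspace s S" "bilinear_on s S circ" "bilinear_on s S br"
    and "\<And>x y z. x \<in> S \<Longrightarrow> y \<in> S \<Longrightarrow> z \<in> S \<Longrightarrow>
      circ x (circ y z) = circ (circ x y) z \<and>
      circ (circ x y) z = circ (circ y x) z \<and>
      br x (br y z) = br (br x y) z + br y (br x z) \<and>
      br x (circ y z) = circ (br x y) z + circ y (br x z) \<and>
      br (circ x y) z = circ x (br y z) + circ y (br x z) \<and>
      circ (br x y) z = - circ (br y x) z"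
  shows "dual_pre_poisson_on s S circ br"
  using assms unfolding dual_pre_poisson_on_def by blast

lemma dpp_rep_onI:
  assumes "vector_space sW" "module.subspace sW W"
    and "lin_action_on sA S sW W lc" "lin_action_on sA S sW W rc"
    and "lin_action_on sA S sW W lb" "lin_action_on sA S sW W rb"
    and "\<And>x y w. x \<in> S \<Longrightarrow> y \<in> S \<Longrightarrow> w \<in> W \<Longrightarrow>
        rc x (rc y w) = rc (circ y x) w \<and>
        rc (circ y x) w = lc y (rc x w) \<and>
        lc y (rc x w) = rc x (lc y w) \<and>
        lc (circ x y) w = lc x (lc y w) \<and>
        lc x (lc y w) = lc y (lc x w) \<and>
        lb (br x y) w = lb x (lb y w) - lb y (lb x w) \<and>
        rb (br x y) w = rb y (rb x w) + lb x (rb y w) \<and>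
        rb x (rb y w) = - rb x (lb y w) \<and>
        rb (circ x y) w = rc y (rb x w) + lc x (rb y w) \<and>
        lb x (rc y w) = rc y (lb x w) + rc (br x y) w \<and>
        lb x (lc y w) = lc (br x y) w + lc y (lb x w) \<and>
        rb x (rc y w) = rc (br y x) w + lc y (rb x w) \<and>
        lb (circ x y) w = lc x (lb y w) + lc y (lb x w) \<and>
        rb x (lc y w - rc y w) = 0 \<and>
        rc x (lb y w + rb y w) = 0 \<and>
        lc (br x y + br y x) w = 0"
  shows "dpp_rep_on sA S circ br sW W lc rc lb rb"
  using assms unfolding dpp_rep_on_def by blast

locale dpp_representation =
  fixes sA :: "'f::field \<Rightarrow> 'a::ab_group_add \<Rightarrow> 'a"
    and circ br :: "'a \<Rightarrow> 'a \<Rightarrow> 'a"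
    and sW :: "'f \<Rightarrow> 'w::ab_group_add \<Rightarrow> 'w" and W :: "'w set"
    and lc rc lb rb :: "'a \<Rightarrow> 'w \<Rightarrow> 'w"
  assumes rep: "dpp_rep_on sA UNIV circ br sW W lc rc lb rb"
begin

lemma rep_vector_space: "vector_space sW"
  and rep_subspace: "module.subspace sW W"
  and rep_lin_actions: "lin_action_on sA UNIV sW W lc" "lin_action_on sA UNIV sW W rc"
    "lin_action_on sA UNIV sW W lb" "lin_action_on sA UNIV sW W rb"
  using rep unfolding dpp_rep_on_def by blast+

lemma action_closed [simp]:
  "w \<in> W \<Longrightarrow> lc x w \<in> W" "w \<in> W \<Longrightarrow> rc x w \<in> W" "w \<in> W \<Longrightarrow> lb x w \<in> W" "w \<in> W \<Longrightarrow> rb x w \<in> W"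
  using rep_lin_actions by (simp_all add: lin_action_on_closed)

lemma action_add_right [simp]:
  "v \<in> W \<Longrightarrow> w \<in> W \<Longrightarrow> lc x (v + w) = lc x v + lc x w"
  "v \<in> W \<Longrightarrow> w \<in> W \<Longrightarrow> rc x (v + w) = rc x v + rc x w"
  "v \<in> W \<Longrightarrow> w \<in> W \<Longrightarrow> lb x (v + w) = lb x v + lb x w"
  "v \<in> W \<Longrightarrow> w \<in> W \<Longrightarrow> rb x (v + w) = rb x v + rb x w"
  using rep_lin_actions by (simp_all add: lin_action_on_add_right)

lemma action_add_left [simp]:
  "w \<in> W \<Longrightarrow> lc (x + y) w = lc x w + lc y w"
  "w \<in> W \<Longrightarrow> rc (x + y) w = rc x w + rc y w"
  "w \<in> W \<Longrightarrow> lb (x + y) w = lb x w + lb y w"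
  "w \<in> W \<Longrightarrow> rb (x + y) w = rb x w + rb y w"
  using rep_lin_actions by (simp_all add: lin_action_on_add_left)

lemma action_diff_right [simp]:
  assumes "v \<in> W" "w \<in> W"
  shows "lc x (v - w) = lc x v - lc x w" "rc x (v - w) = rc x v - rc x w"
    "lb x (v - w) = lb x v - lb x w" "rb x (v - w) = rb x v - rb x w"
proof -
  have "v - w \<in> W"
    using assms module.subspace_diff[OF rep_vector_space[folded module_iff_vector_space] rep_subspace] by blast
  then show "lc x (v - w) = lc x v - lc x w" "rc x (v - w) = rc x v - rc x w"
    "lb x (v - w) = lb x v - lb x w" "rb x (v - w) = rb x v - rb x w"
    using assms action_add_right[of "v - w" w x] by (simp_all add: eq_diff_eq)
qed

context
  fixes w assumes w: "w \<in> W"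
begin

lemma rc_rc_circ: "rc x (rc y w) = rc (circ y x) w"
  and rc_circ: "rc (circ y x) w = lc y (rc x w)"
  and lc_rc_commute: "lc y (rc x w) = rc x (lc y w)"
  and lc_circ: "lc (circ x y) w = lc x (lc y w)"
  and lc_commute: "lc x (lc y w) = lc y (lc x w)"
  and lb_br: "lb (br x y) w = lb x (lb y w) - lb y (lb x w)"
  and rb_br: "rb (br x y) w = rb y (rb x w) + lb x (rb y w)"
  and rb_rb: "rb x (rb y w) = - rb x (lb y w)"
  and rb_circ: "rb (circ x y) w = rc y (rb x w) + lc x (rb y w)"
  and lb_rc: "lb x (rc y w) = rc y (lb x w) + rc (br x y) w"
  and lb_lc: "lb x (lc y w) = lc (br x y) w + lc y (lb x w)"
  and rb_rc: "rb x (rc y w) = rc (br y x) w + lc y (rb x w)"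
  and lb_circ: "lb (circ x y) w = lc x (lb y w) + lc y (lb x w)"
  and rb_lc_minus_rc: "rb x (lc y w - rc y w) = 0"
  and rc_lb_plus_rb: "rc x (lb y w + rb y w) = 0"
  and lc_br_plus_br: "lc (br x y + br y x) w = 0"
  using rep w unfolding dpp_rep_on_def by blast+

lemma rc_rc: "rc x (rc y w) = lc y (rc x w)"
  by (simp add: rc_rc_circ rc_circ)

lemma rb_lc: "rb x (lc y w) = rb x (rc y w)"
  using rb_lc_minus_rc w by simp

lemma rc_rb: "rc x (rb y w) = - rc x (lb y w)"
  using rc_lb_plus_rb w by (simp add: eq_neg_iff_add_eq_0 add.commute)

lemma lc_br_swap: "lc (br y x) w = - lc (br x y) w"
  using lc_br_plus_br w by (simp add: eq_neg_iff_add_eq_0)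

end

(* Oriented towards a normal form in which rc sits inside lc, and lb, rb inside both. With linearity
   this normalises both sides of every identity needed below to the same term, except that the
   antisymmetry lc_br_swap has no orientation: its relevant instances must be supplied by hand. *)
lemmas rep_normalize = rc_rc rc_circ lc_rc_commute[symmetric] lc_circ lc_commute lb_br rb_br rb_rb
  rb_circ lb_rc lb_lc rb_rc lb_circ rb_lc rc_rb

lemma dual_pre_poisson_on_semidirect:
  assumes alg: "dual_pre_poisson_on sA UNIV circ br"
  shows "dual_pre_poisson_on (prod_scale sA sW) (UNIV \<times> W)
    (semidirect_mult circ lc rc) (semidirect_mult br lb rb)"
proof (rule dual_pre_poisson_onI, goal_cases vector_space_prod subspace_prod circ_bilinear br_bilinear
    identities)
  have vsA: "vector_space sA" and bil: "bilinear_on sA UNIV circ" "bilinear_on sA UNIV br"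
    using alg unfolding dual_pre_poisson_on_def by blast+
  show "vector_space (prod_scale sA sW)"
    using vsA rep_vector_space by (rule vector_space_prod_scale)
  show "module.subspace (prod_scale sA sW) (UNIV \<times> W)"
    using vsA rep_vector_space module.subspace_UNIV[OF vsA[folded module_iff_vector_space]]
      rep_subspace
    by (rule subspace_prod_scale_Times)
  show "bilinear_on (prod_scale sA sW) (UNIV \<times> W) (semidirect_mult circ lc rc)"
    using rep_vector_space rep_subspace bil(1) rep_lin_actions(1,2)
    by (rule bilinear_on_semidirect_mult)
  show "bilinear_on (prod_scale sA sW) (UNIV \<times> W) (semidirect_mult br lb rb)"
    using rep_vector_space rep_subspace bil(2) rep_lin_actions(3,4)
    by (rule bilinear_on_semidirect_mult)
next
  case (identities X Y Z)
  then obtain x u y v z w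
    where "X = (x, u)" "Y = (y, v)" "Z = (z, w)" and "u \<in> W" "v \<in> W" "w \<in> W"
    by blast
  moreover have
    "circ x (circ y z) = circ (circ x y) z \<and>
     circ (circ x y) z = circ (circ y x) z \<and>
     br x (br y z) = br (br x y) z + br y (br x z) \<and>
     br x (circ y z) = circ (br x y) z + circ y (br x z) \<and>
     br (circ x y) z = circ x (br y z) + circ y (br x z) \<and>
     circ (br x y) z = - circ (br y x) z"
    using alg unfolding dual_pre_poisson_on_def by blast
  ultimately show ?case
    by (simp add: semidirect_mult_def rep_normalize algebra_simps
        lc_br_swap[of _ y x] lc_br_swap[of _ z x] lc_br_swap[of _ z y])
qed

end

lemma dpp_rep_on_dual:
  fixes sV :: "'f::field \<Rightarrow> 'v::ab_group_add \<Rightarrow> 'v"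
  assumes rep: "dpp_rep_on sA UNIV circ br sV UNIV lc rc lb rb"
  shows "dpp_rep_on sA UNIV circ br dual_scale (dual_space sV)
           (\<lambda>x. - dual_op lc x) (\<lambda>x. - dual_op lc x + dual_op rc x)
           (dual_op lb) (\<lambda>x. - dual_op lb x - dual_op rb x)"
proof -
  interpret dpp_representation sA circ br sV UNIV lc rc lb rb
    using rep by (rule dpp_representation.intro)
  note vsD = vector_space_dual_scale
  note subD = subspace_dual_space[OF rep_vector_space]
  note dual_actions = rep_lin_actions[THEN lin_action_on_dual_op[OF rep_vector_space]]
  show ?thesis
  proof (rule dpp_rep_onI, goal_cases vector_space_dual subspace_dual lc_dual rc_dual lb_dual rb_dual
      identities)
    show "vector_space (dual_scale :: 'f \<Rightarrow> ('v \<Rightarrow> 'f) \<Rightarrow> 'v \<Rightarrow> 'f)" by (fact vsD)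
    show "module.subspace dual_scale (dual_space sV)" by (fact subD)
    show "lin_action_on sA UNIV dual_scale (dual_space sV) (\<lambda>x. - dual_op lc x)"
      by (rule lin_action_on_uminus[OF vsD subD dual_actions(1)])
    show "lin_action_on sA UNIV dual_scale (dual_space sV) (\<lambda>x. - dual_op lc x + dual_op rc x)"
      by (rule lin_action_on_add[OF vsD subD lin_action_on_uminus[OF vsD subD dual_actions(1)]
            dual_actions(2)])
    show "lin_action_on sA UNIV dual_scale (dual_space sV) (dual_op lb)"
      by (fact dual_actions(3))
    show "lin_action_on sA UNIV dual_scale (dual_space sV) (\<lambda>x. - dual_op lb x - dual_op rb x)"
      by (rule lin_action_on_diff[OF vsD subD lin_action_on_uminus[OF vsD subD dual_actions(3)]
            dual_actions(4)])
  next
    case (identities x y \<phi>)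
    then have "\<phi> \<in> dual_space sV" by blast
    then show ?case
      by (intro conjI ext;
          simp add: rep_normalize dual_spaceD dual_op_def algebra_simps lc_br_swap[of _ y x])
  qed
qed

theorem proposition2p30:
  fixes sA :: "'f::field_char_0 \<Rightarrow> 'a::ab_group_add \<Rightarrow> 'a"
    and circ br :: "'a \<Rightarrow> 'a \<Rightarrow> 'a"
    and sV :: "'f \<Rightarrow> 'v::ab_group_add \<Rightarrow> 'v"
    and lc rc lb rb :: "'a \<Rightarrow> 'v \<Rightarrow> 'v"
  assumes alg: "dual_pre_poisson_on sA UNIV circ br"
    and rep: "dpp_rep_on sA UNIV circ br sV UNIV lc rc lb rb"
    and fin: "\<exists>B. finite_dimensional_vector_space sV B"
  shows "dpp_rep_on sA UNIV circ br dual_scale (dual_space sV)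
           (\<lambda>x. - dual_op lc x)
           (\<lambda>x. - dual_op lc x + dual_op rc x)
           (\<lambda>x. dual_op lb x)
           (\<lambda>x. - dual_op lb x - dual_op rb x)
       \<and> dual_pre_poisson_on (sum_scale sA) (UNIV \<times> dual_space sV)
           (\<lambda>(x, u) (y, v). (circ x y, - dual_op lc x v + (- dual_op lc y u + dual_op rc y u)))
           (\<lambda>(x, u) (y, v). (br x y, dual_op lb x v - (dual_op lb y u + dual_op rb y u)))"
proof -
  have dual_rep: "dpp_rep_on sA UNIV circ br dual_scale (dual_space sV)
      (\<lambda>x. - dual_op lc x) (\<lambda>x. - dual_op lc x + dual_op rc x)
      (dual_op lb) (\<lambda>x. - dual_op lb x - dual_op rb x)"
    using rep by (rule dpp_rep_on_dual)
  have semidirect: "dual_pre_poisson_on (prod_scale sA dual_scale) (UNIV \<times> dual_space sV)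
      (semidirect_mult circ (\<lambda>x. - dual_op lc x) (\<lambda>x. - dual_op lc x + dual_op rc x))
      (semidirect_mult br (dual_op lb) (\<lambda>x. - dual_op lb x - dual_op rb x))"
    using dual_rep alg
    by (rule dpp_representation.dual_pre_poisson_on_semidirect[OF dpp_representation.intro])
  have scale_eq: "sum_scale sA = prod_scale sA dual_scale"
    by (simp add: fun_eq_iff sum_scale_def prod_scale_def)
  have circ_eq:
    "(\<lambda>(x, u) (y, v). (circ x y, - dual_op lc x v + (- dual_op lc y u + dual_op rc y u))) =
       semidirect_mult circ (\<lambda>x. - dual_op lc x) (\<lambda>x. - dual_op lc x + dual_op rc x)"
    and br_eq:
    "(\<lambda>(x, u) (y, v). (br x y, dual_op lb x v - (dual_op lb y u + dual_op rb y u))) =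
       semidirect_mult br (dual_op lb) (\<lambda>x. - dual_op lb x - dual_op rb x)"
    by (simp_all add: fun_eq_iff semidirect_mult_def)
  show ?thesis
    unfolding scale_eq circ_eq br_eq using dual_rep semidirect by (rule conjI)
qed

end
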